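(* The maximum matching size problem (on incremental graph streams) admits an extendable bitwise AND gadget with $v(d)=O(d^2)$ and $t(d)=O(d^2)$.
   Context: Let $\zeta\in\mathbb N$ be a fixed constant and $m=\zeta d$. An extendable bitwise AND gadget for a graph function $g$ (here $g(G)$ = maximum number of pairwise vertex-disjoint edges of $G$, a real-valued function) consists of positive increasing functions $v,t:\mathbb N\to\mathbb N$ and, for each $d$: an initial graph $H_{\mathrm{init}}=(V,E_0)$ with $|V|=v(d)$; edges $e_1,\dots,e_d\in\binom V2$, defining $H^1_x=H_{\mathrm{init}}\cup\{e_i: x_i=1\}$ for $x\in\{0,1\}^d$; and for every sequence of queries $q^1,\dots,q^m\in\{0,1\}^d$, edge sets $S^1,T^1,\dots,S^m,T^m$ and functions $\mathrm{dec}_j:\mathrm{Range}(g)\to\mathbb R$ (depending on the queries but not on $x$) such that: (a) each $\mathrm{dec}_j$ is $1$-Lipschitz; (b) with $Q^j_x=H^j_x\cup S^j$, $\mathrm{dec}_j(g(Q^j_x))-\mathrm{dec}_j(g(H^j_x))=\langle x,q^j\rangle$ for all $x$; (c) $H^{j+1}_x=Q^j_x\cup T^j$; and the total number of edge insertions $|E_0|+d+\sum_j(|S^j|+|T^j|)$ is at most $t(d)$. For real-valued $g$ one may take $\mathrm{dec}_j=\mathrm{id}$. *)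

theory Defs
  imports Main "HOL-Library.Landau_Symbols"
begin

definition edges2 :: "nat \<Rightarrow> nat set set" where
  "edges2 n = {e. e \<subseteq> {..<n} \<and> card e = 2}"

text \<open>g(G): maximum number of pairwise vertex-disjoint edges (maximum matching size),
  as a real number.  Only used on finite edge sets.\<close>
definition max_matching :: "nat set set \<Rightarrow> real" where
  "max_matching E = real (Max (card ` {M. M \<subseteq> E \<and> finite M \<and> pairwise disjnt M}))"

text \<open>Inner product of x, q \<in> {0,1}^d, vectors represented by their first d entries.\<close>
definition inner01 :: "nat \<Rightarrow> (nat \<Rightarrow> bool) \<Rightarrow> (nat \<Rightarrow> bool) \<Rightarrow> nat" where
  "inner01 d x q = card {i. i < d \<and> x i \<and> q i}"

text \<open>Graphs H^{j+1}_x (0-based index j): H 0 x = H_init \<union> {e_i : x_i = 1},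
  H (j+1) x = Q^j_x \<union> T^j = H j x \<union> S^j \<union> T^j.\<close>
fun Hgr :: "nat set set \<Rightarrow> (nat \<Rightarrow> nat set) \<Rightarrow> nat \<Rightarrow> (nat \<Rightarrow> nat set set)
             \<Rightarrow> (nat \<Rightarrow> nat set set) \<Rightarrow> nat \<Rightarrow> (nat \<Rightarrow> bool) \<Rightarrow> nat set set" where
  "Hgr E0 e d S T 0 x = E0 \<union> {e i | i. i < d \<and> x i}"
| "Hgr E0 e d S T (Suc j) x = Hgr E0 e d S T j x \<union> S j \<union> T j"

definition Qgr :: "nat set set \<Rightarrow> (nat \<Rightarrow> nat set) \<Rightarrow> nat \<Rightarrow> (nat \<Rightarrow> nat set set)
             \<Rightarrow> (nat \<Rightarrow> nat set set) \<Rightarrow> nat \<Rightarrow> (nat \<Rightarrow> bool) \<Rightarrow> nat set set" where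
  "Qgr E0 e d S T j x = Hgr E0 e d S T j x \<union> S j"

text \<open>Queries q^1..q^m (m = \<zeta> d) are given as qs j (j < m), each a vector in {0,1}^d.
  dec_j is required to be 1-Lipschitz on Range(g) \<subseteq> \<nat>.\<close>
definition ext_AND_gadget ::
  "nat \<Rightarrow> (nat set set \<Rightarrow> real) \<Rightarrow> (nat \<Rightarrow> nat) \<Rightarrow> (nat \<Rightarrow> nat) \<Rightarrow> bool" where
  "ext_AND_gadget \<zeta> g v t \<longleftrightarrow>
     (\<forall>d::nat. \<exists>E0 e.
        E0 \<subseteq> edges2 (v d) \<and> (\<forall>i<d. e i \<in> edges2 (v d)) \<and>
        (\<forall>qs :: nat \<Rightarrow> nat \<Rightarrow> bool. \<exists>S T (dec :: nat \<Rightarrow> real \<Rightarrow> real).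
           (\<forall>j < \<zeta> * d. S j \<subseteq> edges2 (v d) \<and> T j \<subseteq> edges2 (v d)) \<and>
           (\<forall>j < \<zeta> * d. \<forall>a b :: nat. \<bar>dec j (real a) - dec j (real b)\<bar> \<le> \<bar>real a - real b\<bar>) \<and>
           (\<forall>j < \<zeta> * d. \<forall>x :: nat \<Rightarrow> bool.
              dec j (g (Qgr E0 e d S T j x)) - dec j (g (Hgr E0 e d S T j x))
                = real (inner01 d x (qs j))) \<and>
           card E0 + d + (\<Sum>j < \<zeta> * d. card (S j) + card (T j)) \<le> t d))"

end

theory Submission
  imports Defs "HOL-Library.Nat_Bijection" "HOL-Real_Asymp.Real_Asymp"
begin

text \<open>
  For each coordinate i < d the gadget has a hub a_i with a bit edge a_i b_i, present iff
  x_i = 1, and slots k = 0, 1, ... with vertices c_ik, d_ik. Before round j the graph has the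
  star edges a_i c_ik for k \<le> j and the slot edges c_ik d_ik for k < j, and a maximum
  matching takes all of the latter together with a_i c_ij. A query inserts c_ij d_ij for q_i = 1;
  this takes c_ij away from a_i, which can then only be matched to b_i, so the matching number
  grows by exactly <x, q>. In every state optimality is certified by a vertex cover of the same
  size as an explicit matching. The round update inserts all c_ij d_ij and the star edges
  a_i c_i(j+1), which restores the invariant for j + 1. Only the slots k \<le> \<zeta> d are ever
  used, giving O(d^2) vertices, and each round inserts at most 3 d edges.
\<close>

lemma card_matching_le_card_cover:
  assumes "M \<subseteq> E" and "pairwise disjnt M" and "finite C" and "\<forall>e\<in>E. e \<inter> C \<noteq> {}"
  shows "card M \<le> card C"
  by (rule card_le_if_inj_on_rel[where r = "\<lambda>e c. c \<in> e"])
    (use assms in \<open>auto simp: pairwise_def disjnt_def\<close>)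

lemma max_matching_eqI:
  assumes "finite E" and "M \<subseteq> E" and "pairwise disjnt M"
    and "finite C" and "\<forall>e\<in>E. e \<inter> C \<noteq> {}" and "card C \<le> card M"
  shows "max_matching E = card C"
proof -
  let ?sizes = "card ` {M. M \<subseteq> E \<and> finite M \<and> pairwise disjnt M}"
  have le_cover: "n \<le> card C" if "n \<in> ?sizes" for n
    using that card_matching_le_card_cover[OF _ _ assms(4,5)] by blast
  have M_size: "card M \<in> ?sizes"
    using assms(1-3) finite_subset by blast
  moreover have "card M = card C"
    using le_cover[OF M_size] assms(6) by (rule le_antisym)
  ultimately have "Max ?sizes = card C"
    using le_cover by (intro Max_eqI) (auto intro: finite_subset[of _ "{..card C}"])
  then show ?thesis
    unfolding max_matching_def by simp
qed

text \<open>The vertices vtx 0 i 0, vtx 1 i 0, vtx 2 i k and vtx 3 i k are a_i, b_i, c_ik and d_ik;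
  Cantor pairing keeps the labels injective and quadratically bounded.\<close>

definition vtx :: "nat \<Rightarrow> nat \<Rightarrow> nat \<Rightarrow> nat" where
  "vtx r i k = 4 * prod_encode (i, k) + r"

lemma vtx_eq_iff [simp]:
  assumes "r < 4" and "r' < 4"
  shows "vtx r i k = vtx r' i' k' \<longleftrightarrow> r = r' \<and> i = i' \<and> k = k'"
proof -
  have "4 * p + r = 4 * p' + r' \<longleftrightarrow> p = p' \<and> r = r'" for p p' :: nat
    using assms by presburger
  then show ?thesis
    unfolding vtx_def by auto
qed

lemma prod_encode_less_square: "prod_encode (i, k) < (i + k + 1)^2"
proof -
  have "2 * triangle (i + k) = (i + k) * (i + k + 1)"
    unfolding triangle_def by simp
  then show ?thesis
    unfolding prod_encode_def by (simp add: power2_eq_square algebra_simps)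
qed

lemma vtx_less:
  assumes "r < 4"
  shows "vtx r i k < 4 * (i + k + 1)^2"
  using prod_encode_less_square[of i k] assms unfolding vtx_def by linarith

lemma vtx_edge_in_edges2:
  assumes "r < 4" and "r' < 4" and "r \<noteq> r'" and "i < d" and "k \<le> z * d" and "k' \<le> z * d"
  shows "{vtx r i k, vtx r' i k'} \<in> edges2 (4 * (z + 1)^2 * (d + 1)^2)"
proof -
  have "4 * (i + l + 1)^2 \<le> 4 * (z + 1)^2 * (d + 1)^2" if "l \<le> z * d" for l
  proof -
    have "i + l + 1 \<le> (z + 1) * (d + 1)"
      using assms(4) that by (simp add: algebra_simps)
    then show ?thesis
      by (simp add: power_mono flip: power_mult_distrib)
  qed
  then show ?thesis
    using vtx_less[OF assms(1), of i k] vtx_less[OF assms(2), of i k'] assms(1-3,5,6)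
    unfolding edges2_def by fastforce
qed

definition gadget_graph :: "nat \<Rightarrow> nat \<Rightarrow> (nat \<Rightarrow> bool) \<Rightarrow> (nat \<Rightarrow> bool) \<Rightarrow> nat set set" where
  "gadget_graph d m q x =
     {{vtx 0 i 0, vtx 1 i 0} | i. i < d \<and> x i}
   \<union> {{vtx 0 i 0, vtx 2 i k} | i k. i < d \<and> k \<le> m}
   \<union> {{vtx 2 i k, vtx 3 i k} | i k. i < d \<and> k < m}
   \<union> {{vtx 2 i m, vtx 3 i m} | i. i < d \<and> q i}"

definition gadget_matching :: "nat \<Rightarrow> nat \<Rightarrow> (nat \<Rightarrow> bool) \<Rightarrow> (nat \<Rightarrow> bool) \<Rightarrow> nat set set" where
  "gadget_matching d m q x =
     {{vtx 2 i k, vtx 3 i k} | i k. i < d \<and> k < m}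
   \<union> {{vtx 2 i m, vtx 3 i m} | i. i < d \<and> q i}
   \<union> {{vtx 0 i 0, vtx 2 i m} | i. i < d \<and> \<not> q i}
   \<union> {{vtx 0 i 0, vtx 1 i 0} | i. i < d \<and> q i \<and> x i}"

definition gadget_cover :: "nat \<Rightarrow> nat \<Rightarrow> (nat \<Rightarrow> bool) \<Rightarrow> (nat \<Rightarrow> bool) \<Rightarrow> nat set" where
  "gadget_cover d m q x =
     {vtx 2 i k | i k. i < d \<and> k < m}
   \<union> {vtx 2 i m | i. i < d \<and> q i}
   \<union> {vtx 0 i 0 | i. i < d \<and> \<not> q i}
   \<union> {vtx 0 i 0 | i. i < d \<and> q i \<and> x i}"

lemma gadget_graph_cases:
  assumes "e \<in> gadget_graph d m q x"
  obtains (bit) i where "i < d" "x i" "e = {vtx 0 i 0, vtx 1 i 0}"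
    | (star) i k where "i < d" "k \<le> m" "e = {vtx 0 i 0, vtx 2 i k}"
    | (slot) i k where "i < d" "k < m" "e = {vtx 2 i k, vtx 3 i k}"
    | (query) i where "i < d" "q i" "e = {vtx 2 i m, vtx 3 i m}"
  using assms unfolding gadget_graph_def by blast

lemma gadget_matching_cases:
  assumes "e \<in> gadget_matching d m q x"
  obtains (slot) i k where "i < d" "k < m" "e = {vtx 2 i k, vtx 3 i k}"
    | (query) i where "i < d" "q i" "e = {vtx 2 i m, vtx 3 i m}"
    | (star) i where "i < d" "\<not> q i" "e = {vtx 0 i 0, vtx 2 i m}"
    | (bit) i where "i < d" "q i" "x i" "e = {vtx 0 i 0, vtx 1 i 0}"
  using assms unfolding gadget_matching_def by blast

lemma mem_gadget_cover_iff:
  assumes "r < 4"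
  shows "vtx r i k \<in> gadget_cover d m q x \<longleftrightarrow>
    i < d \<and> (r = 2 \<and> (k < m \<or> k = m \<and> q i) \<or> r = 0 \<and> k = 0 \<and> (\<not> q i \<or> x i))"
  using assms unfolding gadget_cover_def by auto

lemma gadget_matching_subset_graph: "gadget_matching d m q x \<subseteq> gadget_graph d m q x"
  unfolding gadget_matching_def gadget_graph_def by blast

lemma gadget_matching_edge_unique:
  assumes "e \<in> gadget_matching d m q x" and "e' \<in> gadget_matching d m q x"
    and "c \<in> e" and "c \<in> e'"
  shows "e = e'"
  using assms(1) by (cases rule: gadget_matching_cases)
    (use assms(2) in \<open>cases rule: gadget_matching_cases; use assms(3,4) in auto\<close>)+

lemma gadget_cover_meets_edges: "\<forall>e \<in> gadget_graph d m q x. e \<inter> gadget_cover d m q x \<noteq> {}"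
proof
  fix e assume "e \<in> gadget_graph d m q x"
  then show "e \<inter> gadget_cover d m q x \<noteq> {}"
    by (cases rule: gadget_graph_cases) (auto simp: mem_gadget_cover_iff le_less)
qed

lemma gadget_cover_subset_matching: "gadget_cover d m q x \<subseteq> \<Union> (gadget_matching d m q x)"
  unfolding gadget_cover_def gadget_matching_def Union_Un_distrib by (intro Un_mono) blast+

lemma gadget_matching_meets_cover_once:
  assumes "e \<in> gadget_matching d m q x"
    and "c \<in> e \<inter> gadget_cover d m q x" and "c' \<in> e \<inter> gadget_cover d m q x"
  shows "c = c'"
  using assms(1) by (cases rule: gadget_matching_cases) (use assms(2,3) in \<open>auto simp: mem_gadget_cover_iff\<close>)

lemma card_vtx_image:
  assumes "r < 4"
  shows "card ((\<lambda>i. vtx r i k) ` A) = card A"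
  using assms by (intro card_image) (simp add: inj_on_def)

lemma card_filter_add_card_filter_not: "card {i. i < d \<and> P i} + card {i. i < d \<and> \<not> P i} = d"
proof -
  have "{..<d} = {i. i < d \<and> P i} \<union> {i. i < d \<and> \<not> P i}"
    by auto
  then have "card {..<d} = card {i. i < d \<and> P i} + card {i. i < d \<and> \<not> P i}"
    by (simp add: card_Un_disjoint disjoint_iff)
  then show ?thesis
    by simp
qed

lemma card_gadget_cover: "card (gadget_cover d m q x) = d * m + d + inner01 d x q"
proof -
  let ?slot = "(\<lambda>(i, k). vtx 2 i k) ` ({..<d} \<times> {..<m})"
  let ?query = "(\<lambda>i. vtx 2 i m) ` {i. i < d \<and> q i}"
  let ?star = "(\<lambda>i. vtx 0 i 0) ` {i. i < d \<and> \<not> q i}"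
  let ?bit = "(\<lambda>i. vtx 0 i 0) ` {i. i < d \<and> x i \<and> q i}"
  have cover: "gadget_cover d m q x = (?slot \<union> ?query) \<union> (?star \<union> ?bit)"
    unfolding gadget_cover_def by auto
  have "card ?slot = d * m"
    by (subst card_image) (auto simp: inj_on_def card_cartesian_product)
  moreover have "card (?slot \<union> ?query) = card ?slot + card ?query"
    by (rule card_Un_disjoint) auto
  moreover have "card (?star \<union> ?bit) = card ?star + card ?bit"
    by (rule card_Un_disjoint) auto
  moreover have "card (gadget_cover d m q x) = card (?slot \<union> ?query) + card (?star \<union> ?bit)"
    unfolding cover by (rule card_Un_disjoint) auto
  ultimately show ?thesis
    using card_filter_add_card_filter_not[of d q]
    by (simp add: card_vtx_image inner01_def)
qed

lemma max_matching_gadget_graph: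
  "max_matching (gadget_graph d m q x) = real (d * m + d + inner01 d x q)"
proof -
  have "max_matching (gadget_graph d m q x) = card (gadget_cover d m q x)"
  proof (rule max_matching_eqI)
    show "finite (gadget_graph d m q x)"
      unfolding gadget_graph_def by (intro finite_UnI finite_image_set2 finite_image_set) auto
    show "finite (gadget_cover d m q x)"
      unfolding gadget_cover_def by (intro finite_UnI finite_image_set2 finite_image_set) auto
    show "gadget_matching d m q x \<subseteq> gadget_graph d m q x"
      by (rule gadget_matching_subset_graph)
    show "pairwise disjnt (gadget_matching d m q x)"
      unfolding pairwise_def disjnt_def using gadget_matching_edge_unique by blast
    show "\<forall>e \<in> gadget_graph d m q x. e \<inter> gadget_cover d m q x \<noteq> {}"
      by (rule gadget_cover_meets_edges)
    show "card (gadget_cover d m q x) \<le> card (gadget_matching d m q x)"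
    proof (rule card_le_if_inj_on_rel[where r = "\<lambda>c e. c \<in> e"])
      show "finite (gadget_matching d m q x)"
        unfolding gadget_matching_def by (intro finite_UnI finite_image_set2 finite_image_set) auto
    qed (use gadget_cover_subset_matching gadget_matching_meets_cover_once in blast)+
  qed
  then show ?thesis
    by (simp add: card_gadget_cover)
qed

definition initial_edges :: "nat \<Rightarrow> nat set set" where
  "initial_edges d = {{vtx 0 i 0, vtx 2 i 0} | i. i < d}"

definition bit_edge :: "nat \<Rightarrow> nat set" where
  "bit_edge i = {vtx 0 i 0, vtx 1 i 0}"

definition query_edges :: "nat \<Rightarrow> (nat \<Rightarrow> bool) \<Rightarrow> nat \<Rightarrow> nat set set" where
  "query_edges d q m = {{vtx 2 i m, vtx 3 i m} | i. i < d \<and> q i}"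

definition round_edges :: "nat \<Rightarrow> nat \<Rightarrow> nat set set" where
  "round_edges d m = {{vtx 2 i m, vtx 3 i m} | i. i < d} \<union> {{vtx 0 i 0, vtx 2 i (Suc m)} | i. i < d}"

lemma gadget_graph_0:
  "gadget_graph d 0 (\<lambda>_. False) x = initial_edges d \<union> {bit_edge i | i. i < d \<and> x i}"
  unfolding gadget_graph_def initial_edges_def bit_edge_def by blast

lemma gadget_graph_Suc:
  "gadget_graph d (Suc m) (\<lambda>_. False) x = gadget_graph d m (\<lambda>_. False) x \<union> round_edges d m"
  unfolding gadget_graph_def round_edges_def le_Suc_eq less_Suc_eq by blast

lemma gadget_graph_query:
  "gadget_graph d m q x = gadget_graph d m (\<lambda>_. False) x \<union> query_edges d q m"
  unfolding gadget_graph_def query_edges_def by blast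

lemma query_edges_subset_round_edges: "query_edges d q m \<subseteq> round_edges d m"
  unfolding query_edges_def round_edges_def by blast

lemma Hgr_gadget:
  "Hgr (initial_edges d) bit_edge d (\<lambda>j. query_edges d (qs j) j) (round_edges d) j x
     = gadget_graph d j (\<lambda>_. False) x"
proof (induction j)
  case 0
  show ?case
    by (simp add: gadget_graph_0)
next
  case (Suc j)
  have "query_edges d (qs j) j \<union> round_edges d j = round_edges d j"
    using query_edges_subset_round_edges by blast
  with Suc show ?case
    by (simp add: gadget_graph_Suc Un_assoc)
qed

lemma Qgr_gadget:
  "Qgr (initial_edges d) bit_edge d (\<lambda>j. query_edges d (qs j) j) (round_edges d) j x
     = gadget_graph d j (qs j) x"
  unfolding Qgr_def Hgr_gadget gadget_graph_query[of d j "qs j"] ..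

lemma initial_edges_in_edges2: "initial_edges d \<subseteq> edges2 (4 * (z + 1)^2 * (d + 1)^2)"
  unfolding initial_edges_def using vtx_edge_in_edges2[of 0 2 _ d 0 z 0] by auto

lemma bit_edge_in_edges2: "i < d \<Longrightarrow> bit_edge i \<in> edges2 (4 * (z + 1)^2 * (d + 1)^2)"
  unfolding bit_edge_def using vtx_edge_in_edges2[of 0 1 i d 0 z 0] by simp

lemma round_edges_in_edges2: "j < z * d \<Longrightarrow> round_edges d j \<subseteq> edges2 (4 * (z + 1)^2 * (d + 1)^2)"
  unfolding round_edges_def
  using vtx_edge_in_edges2[of 2 3 _ d j z j] vtx_edge_in_edges2[of 0 2 _ d 0 z "Suc j"] by auto

lemma card_setcompr_less_le: "card {f i | i. i < d \<and> P i} \<le> d"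
proof -
  have "card {f i | i. i < d \<and> P i} \<le> card {i. i < d \<and> P i}"
    unfolding setcompr_eq_image by (rule card_image_le) simp
  also have "\<dots> \<le> card {..<d}"
    by (rule card_mono) auto
  finally show ?thesis
    by simp
qed

lemma card_setcompr_lessThan_le: "card {f i | i. i < d} \<le> d"
  using card_setcompr_less_le[of f d "\<lambda>_. True"] by simp

lemma card_stream_edges_insertions_le:
  "card (initial_edges d) + d + (\<Sum>j < z * d. card (query_edges d (qs j) j) + card (round_edges d j))
     \<le> (3 * z + 2) * (d + 1)^2"
proof -
  have "card (query_edges d (qs j) j) + card (round_edges d j) \<le> 3 * d" for j
  proof -
    have "card (query_edges d (qs j) j) \<le> d"
      unfolding query_edges_def by (rule card_setcompr_less_le)
    moreover have "card (round_edges d j) \<le> d + d"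
      unfolding round_edges_def
      by (rule order_trans[OF card_Un_le add_mono]) (rule card_setcompr_lessThan_le)+
    ultimately show ?thesis
      by linarith
  qed
  then have "(\<Sum>j < z * d. card (query_edges d (qs j) j) + card (round_edges d j)) \<le> (\<Sum>j < z * d. 3 * d)"
    by (rule sum_mono)
  moreover have "card (initial_edges d) \<le> d"
    unfolding initial_edges_def by (rule card_setcompr_lessThan_le)
  moreover have "d + d + (\<Sum>j < z * d. 3 * d) \<le> (3 * z + 2) * (d + 1)^2"
    by (simp add: power2_eq_square algebra_simps)
  ultimately show ?thesis
    by linarith
qed

lemma ext_AND_gadget_realI:
  fixes E :: "nat \<Rightarrow> nat set set" and e :: "nat \<Rightarrow> nat \<Rightarrow> nat set"
    and S T :: "nat \<Rightarrow> (nat \<Rightarrow> nat \<Rightarrow> bool) \<Rightarrow> nat \<Rightarrow> nat set set"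
  assumes "\<And>d. E d \<subseteq> edges2 (v d)"
    and "\<And>d i. i < d \<Longrightarrow> e d i \<in> edges2 (v d)"
    and "\<And>d qs j. j < z * d \<Longrightarrow> S d qs j \<subseteq> edges2 (v d) \<and> T d qs j \<subseteq> edges2 (v d)"
    and "\<And>d qs j x. j < z * d \<Longrightarrow>
      g (Qgr (E d) (e d) d (S d qs) (T d qs) j x) - g (Hgr (E d) (e d) d (S d qs) (T d qs) j x)
        = real (inner01 d x (qs j))"
    and "\<And>d qs. card (E d) + d + (\<Sum>j < z * d. card (S d qs j) + card (T d qs j)) \<le> t d"
  shows "ext_AND_gadget z g v t"
  unfolding ext_AND_gadget_def
proof (intro allI exI conjI impI)
  fix d j a b :: nat and qs
  show "E d \<subseteq> edges2 (v d)" and "\<And>i. i < d \<Longrightarrow> e d i \<in> edges2 (v d)"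
    by (fact assms(1,2))+
  show "S d qs j \<subseteq> edges2 (v d)" and "T d qs j \<subseteq> edges2 (v d)" if "j < z * d"
    using assms(3)[OF that] by simp_all
  show "\<bar>(\<lambda>_ y. y) j (real a) - (\<lambda>_ y. y) j (real b)\<bar> \<le> \<bar>real a - real b\<bar>"
    by simp
  show "(\<lambda>_ y. y) j (g (Qgr (E d) (e d) d (S d qs) (T d qs) j x))
      - (\<lambda>_ y. y) j (g (Hgr (E d) (e d) d (S d qs) (T d qs) j x)) = real (inner01 d x (qs j))"
    if "j < z * d" for x
    using assms(4)[OF that] by simp
  show "card (E d) + d + (\<Sum>j < z * d. card (S d qs j) + card (T d qs j)) \<le> t d"
    by (fact assms(5))
qed

lemma ext_AND_gadget_max_matching:
  "ext_AND_gadget z max_matching (\<lambda>d. 4 * (z + 1)^2 * (d + 1)^2) (\<lambda>d. (3 * z + 2) * (d + 1)^2)"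
proof (rule ext_AND_gadget_realI[where E = initial_edges and e = "\<lambda>_. bit_edge"
      and S = "\<lambda>d qs j. query_edges d (qs j) j" and T = "\<lambda>d _. round_edges d"])
  fix d i j :: nat and qs :: "nat \<Rightarrow> nat \<Rightarrow> bool" and x :: "nat \<Rightarrow> bool"
  show "initial_edges d \<subseteq> edges2 (4 * (z + 1)^2 * (d + 1)^2)"
    by (rule initial_edges_in_edges2)
  show "i < d \<Longrightarrow> bit_edge i \<in> edges2 (4 * (z + 1)^2 * (d + 1)^2)"
    by (rule bit_edge_in_edges2)
  show "query_edges d (qs j) j \<subseteq> edges2 (4 * (z + 1)^2 * (d + 1)^2)
      \<and> round_edges d j \<subseteq> edges2 (4 * (z + 1)^2 * (d + 1)^2)" if "j < z * d"
    using round_edges_in_edges2[OF that] query_edges_subset_round_edges by blast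
  show "max_matching (Qgr (initial_edges d) bit_edge d (\<lambda>j. query_edges d (qs j) j) (round_edges d) j x)
      - max_matching (Hgr (initial_edges d) bit_edge d (\<lambda>j. query_edges d (qs j) j) (round_edges d) j x)
      = real (inner01 d x (qs j))"
    by (simp add: Qgr_gadget Hgr_gadget max_matching_gadget_graph inner01_def)
  show "card (initial_edges d) + d + (\<Sum>j < z * d. card (query_edges d (qs j) j) + card (round_edges d j))
      \<le> (3 * z + 2) * (d + 1)^2"
    by (rule card_stream_edges_insertions_le)
qed

lemma strict_mono_mult_square_Suc:
  assumes "0 < c"
  shows "strict_mono (\<lambda>d::nat. c * (d + 1)^2)"
  using assms by (intro strict_monoI) (simp add: power_strict_mono)

lemma bigo_mult_square_Suc: "(\<lambda>d::nat. real (c * (d + 1)^2)) \<in> O(\<lambda>d. real d ^ 2)"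
  by real_asymp

theorem mainTheorem3:
  fixes \<zeta> :: nat
  shows "\<exists>v t :: nat \<Rightarrow> nat.
           (\<forall>d. v d > 0) \<and> (\<forall>d. t d > 0) \<and> strict_mono v \<and> strict_mono t \<and>
           (\<lambda>d. real (v d)) \<in> O(\<lambda>d. real d ^ 2) \<and>
           (\<lambda>d. real (t d)) \<in> O(\<lambda>d. real d ^ 2) \<and>
           ext_AND_gadget \<zeta> max_matching v t"
  by (rule exI[of _ "\<lambda>d. 4 * (\<zeta> + 1)^2 * (d + 1)^2"], rule exI[of _ "\<lambda>d. (3 * \<zeta> + 2) * (d + 1)^2"],
      intro conjI allI strict_mono_mult_square_Suc bigo_mult_square_Suc ext_AND_gadget_max_matching)
    simp_all

end
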